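(* If the matrix $i\begin{pmatrix}\langle U_\alpha,\bar U_{\bar\beta}\rangle&\langle U_\alpha,V\rangle\\ \langle\bar V,\bar U_{\bar\beta}\rangle&\langle\bar V,V\rangle\end{pmatrix}$ is positive definite, then the $(n+1)\times(n+1)$ matrix $\begin{pmatrix}\mathcal{D}_\alpha X^I&\bar X^I\end{pmatrix}$ (columns indexed by $\alpha=1,\dots,n$ and one extra column) is invertible.
   Context: $V=\begin{pmatrix}X^I\\ F_I\end{pmatrix}$ ($I=0,\dots,n$) over an $n$-dimensional Kähler manifold with coordinates $z^\alpha$ and Kähler potential $K$; $U_\alpha=\mathcal{D}_\alpha V=\begin{pmatrix}\mathcal{D}_\alpha X^I\\ \mathcal{D}_\alpha F_I\end{pmatrix}$ with $\mathcal{D}_\alpha V=\partial_\alpha V+\tfrac12(\partial_\alpha K)V$, and $\bar U_{\bar\alpha}$ its complex conjugate; $\langle A,B\rangle=A^T\Omega B$ with $\Omega=\begin{pmatrix}0&\mathbb{1}\\-\mathbb{1}&0\end{pmatrix}$. *)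

theory Defs
  imports "HOL-Analysis.Analysis"
begin

text \<open>Local holomorphic coordinates z = (z^alpha) on an open subset of C^n are modelled by
  vectors of type complex^'n. Sections X^I, F_I are functions complex^'n => complex^'i
  (index I ranges over a type 'i with CARD('i) = n+1).\<close>

text \<open>Wirtinger (holomorphic) partial derivative d/dz^alpha of a (real-)differentiable map,
  expressed through its real Frechet derivative: (1/2)(d/dx^alpha - i d/dy^alpha).\<close>
definition wirt_vec :: "(complex^'n \<Rightarrow> complex^'i) \<Rightarrow> complex^'n \<Rightarrow> 'n \<Rightarrow> complex^'i" where
  "wirt_vec f z a = (1/2) *s (frechet_derivative f (at z) (axis a 1)
                              - \<i> *s frechet_derivative f (at z) (axis a \<i>))"

definition wirt_real :: "(complex^'n \<Rightarrow> real) \<Rightarrow> complex^'n \<Rightarrow> 'n \<Rightarrow> complex" where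
  "wirt_real K z a = (1/2) * (complex_of_real (frechet_derivative K (at z) (axis a 1))
                              - \<i> * complex_of_real (frechet_derivative K (at z) (axis a \<i>)))"

definition kcov :: "(complex^'n \<Rightarrow> real) \<Rightarrow> (complex^'n \<Rightarrow> complex^'i) \<Rightarrow> complex^'n \<Rightarrow> 'n \<Rightarrow> complex^'i" where
  "kcov K f z a = wirt_vec f z a + ((1/2) * wirt_real K z a) *s f z"

text \<open>Symplectic product <A,B> = A^T Omega B, Omega = ((0,1),(-1,0)), of symplectic vectors
  A = (A^I, A_I) represented as pairs (upper component, lower component).\<close>
definition symp :: "(complex^'i) \<times> (complex^'i) \<Rightarrow> (complex^'i) \<times> (complex^'i) \<Rightarrow> complex" where
  "symp A B = (\<Sum>I\<in>UNIV. fst A $ I * snd B $ I - snd A $ I * fst B $ I)"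

definition cnjv :: "complex^'i \<Rightarrow> complex^'i" where
  "cnjv v = (\<chi> I. cnj (v $ I))"

definition pos_def_cmat :: "complex^'k^'k \<Rightarrow> bool" where
  "pos_def_cmat M \<longleftrightarrow> (\<forall>x::complex^'k. x \<noteq> 0 \<longrightarrow>
     (let q = (\<Sum>a\<in>UNIV. \<Sum>b\<in>UNIV. cnj (x $ a) * M $ a $ b * x $ b) in q \<in> \<real> \<and> Re q > 0))"

end

theory Submission
  imports Defs
begin

(* Let W_a = (U_a, L_a) be the symplectic vectors D_alpha V and conj V. If
   sum_a c_a U_a = 0, then W = sum_a c_a W_a has vanishing upper component, so
   <W, conj W> = 0. By sesquilinearity this is the Hermitian form of the positive
   definite matrix i <W_a, conj W_b> at conj c, hence c = 0: the n+1 columns U_a of the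
   square matrix are linearly independent. Differentiability plays no role: only the
   values of D_alpha X, D_alpha F, X and F at z enter. *)

lemma invertible_if_ker_trivial:
  fixes A :: "'a::field^'n^'m"
  assumes "CARD('n) = CARD('m)" and "\<And>x. A *v x = 0 \<Longrightarrow> x = 0"
  shows "invertible A"
proof -
  have inj: "inj ((*v) A)"
    unfolding vec.inj_iff_eq_0 using assms(2) by blast
  have "vec.dim (UNIV :: ('a^'m) set) = vec.dim (UNIV :: ('a^'n) set)"
    unfolding vec.dim_UNIV card_cart_basis using assms(1) by simp
  then have "surj ((*v) A)"
    by (rule vec.linear_injective_imp_surjective[OF matrix_vector_mul_linear_gen inj])
  with inj show ?thesis
    by (simp add: invertible_eq_bij bij_def)
qed

lemma cnjv_nth [simp]: "cnjv v $ i = cnj (v $ i)"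
  by (simp add: cnjv_def)

lemma cnjv_cnjv [simp]: "cnjv (cnjv v) = v"
  by (simp add: vec_eq_iff)

lemma cnjv_zero: "cnjv 0 = 0"
  by (simp add: vec_eq_iff)

lemma cnjv_sum_scale:
  "cnjv (\<Sum>a\<in>A. c a *s U a) = (\<Sum>a\<in>A. cnj (c a) *s cnjv (U a))"
  by (simp add: vec_eq_iff cnj_sum)

lemma symp_sum_scale:
  fixes U L :: "'a \<Rightarrow> complex^'i" and U' L' :: "'b \<Rightarrow> complex^'i"
  shows "symp (\<Sum>a\<in>A. c a *s U a, \<Sum>a\<in>A. c a *s L a) (\<Sum>b\<in>B. d b *s U' b, \<Sum>b\<in>B. d b *s L' b)
    = (\<Sum>a\<in>A. \<Sum>b\<in>B. c a * d b * symp (U a, L a) (U' b, L' b))"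
proof -
  have "symp (\<Sum>a\<in>A. c a *s U a, \<Sum>a\<in>A. c a *s L a) (\<Sum>b\<in>B. d b *s U' b, \<Sum>b\<in>B. d b *s L' b)
      = (\<Sum>I\<in>UNIV. \<Sum>a\<in>A. \<Sum>b\<in>B. c a * d b * (U a $ I * L' b $ I - L a $ I * U' b $ I))"
    unfolding symp_def by (simp add: sum_product sum_subtractf[symmetric] algebra_simps)
  also have "\<dots> = (\<Sum>a\<in>A. \<Sum>b\<in>B. \<Sum>I\<in>UNIV. c a * d b * (U a $ I * L' b $ I - L a $ I * U' b $ I))"
    by (simp add: sum.swap[of _ UNIV])
  also have "\<dots> = (\<Sum>a\<in>A. \<Sum>b\<in>B. c a * d b * symp (U a, L a) (U' b, L' b))"
    by (simp add: symp_def sum_distrib_left)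
  finally show ?thesis .
qed

lemma symp_upper_zero: "symp (0, L) (0, L') = 0"
  by (simp add: symp_def)

lemma hermitian_form_symp_gram:
  fixes U L :: "'k::finite \<Rightarrow> complex^'i" and x :: "complex^'k"
  defines "c \<equiv> \<lambda>a. cnj (x $ a)"
  shows "(\<Sum>a\<in>UNIV. \<Sum>b\<in>UNIV. cnj (x $ a) * (\<i> * symp (U a, L a) (cnjv (U b), cnjv (L b))) * x $ b)
    = \<i> * symp (\<Sum>a\<in>UNIV. c a *s U a, \<Sum>a\<in>UNIV. c a *s L a)
               (cnjv (\<Sum>a\<in>UNIV. c a *s U a), cnjv (\<Sum>a\<in>UNIV. c a *s L a))"
  unfolding cnjv_sum_scale symp_sum_scale c_def
  by (simp add: sum_distrib_left algebra_simps)

lemma pos_def_symp_gram_imp_independent: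
  fixes U L :: "'k::finite \<Rightarrow> complex^'i" and c :: "complex^'k"
  assumes pd: "pos_def_cmat (\<chi> a b. \<i> * symp (U a, L a) (cnjv (U b), cnjv (L b)))"
    and comb: "(\<Sum>a\<in>UNIV. c $ a *s U a) = 0"
  shows "c = 0"
proof (rule ccontr)
  let ?q = "\<lambda>x::complex^'k. \<Sum>a\<in>UNIV. \<Sum>b\<in>UNIV.
    cnj (x $ a) * (\<i> * symp (U a, L a) (cnjv (U b), cnjv (L b))) * x $ b"
  assume "c \<noteq> 0"
  then have "cnjv c \<noteq> 0"
    by (simp add: vec_eq_iff)
  with pd have "Re (?q (cnjv c)) > 0"
    unfolding pos_def_cmat_def Let_def vec_lambda_beta by blast
  moreover have "?q (cnjv c) = 0"
    unfolding hermitian_form_symp_gram by (simp add: comb cnjv_zero symp_upper_zero)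
  ultimately show False
    by (metis less_irrefl zero_complex.sel(1))
qed

theorem lemma7:
  fixes X F :: "complex^'n \<Rightarrow> complex^'i"
    and K :: "complex^'n \<Rightarrow> real"
    and z :: "complex^'n"
  assumes dim: "CARD('i) = CARD('n) + 1"
    and dX: "X differentiable (at z)"
    and dF: "F differentiable (at z)"
    and dK: "K differentiable (at z)"
    and pd: "pos_def_cmat
      (\<chi> a b. \<i> * (case a of
           Some \<alpha> \<Rightarrow> (case b of
               Some \<beta> \<Rightarrow> symp (kcov K X z \<alpha>, kcov K F z \<alpha>) (cnjv (kcov K X z \<beta>), cnjv (kcov K F z \<beta>))
             | None \<Rightarrow> symp (kcov K X z \<alpha>, kcov K F z \<alpha>) (X z, F z))
         | None \<Rightarrow> (case b of
               Some \<beta> \<Rightarrow> symp (cnjv (X z), cnjv (F z)) (cnjv (kcov K X z \<beta>), cnjv (kcov K F z \<beta>))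
             | None \<Rightarrow> symp (cnjv (X z), cnjv (F z)) (X z, F z))))"
  shows "invertible ((\<chi> I c. case c of Some \<alpha> \<Rightarrow> kcov K X z \<alpha> $ I | None \<Rightarrow> cnj (X z $ I))
                      :: complex^'n option^'i)"
proof (rule invertible_if_ker_trivial)
  show "CARD('n option) = CARD('i)"
    using dim by (simp add: card_UNIV_option)
next
  define U where "U a = (case a of Some \<alpha> \<Rightarrow> kcov K X z \<alpha> | None \<Rightarrow> cnjv (X z))" for a
  define L where "L a = (case a of Some \<alpha> \<Rightarrow> kcov K F z \<alpha> | None \<Rightarrow> cnjv (F z))" for a
  fix c :: "complex^'n option"
  assume "(\<chi> I c. case c of Some \<alpha> \<Rightarrow> kcov K X z \<alpha> $ I | None \<Rightarrow> cnj (X z $ I)) *v c = 0"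
    (is "?A *v c = 0")
  moreover have "column a ?A = U a" for a
    by (simp add: column_def U_def vec_eq_iff split: option.split)
  ultimately have "(\<Sum>a\<in>UNIV. c $ a *s U a) = 0"
    unfolding matrix_mult_sum by simp
  moreover have "pos_def_cmat (\<chi> a b. \<i> * symp (U a, L a) (cnjv (U b), cnjv (L b)))"
    using pd by (rule back_subst[where P = pos_def_cmat])
      (simp add: vec_eq_iff U_def L_def split: option.split)
  ultimately show "c = 0"
    using pos_def_symp_gram_imp_independent by blast
qed

end
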